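(* For integers $0\le l\le m$, $$d_{l,m}=\frac{1}{l!\,m!\,2^{m+l}}\left(\alpha_{l}(m)\prod_{k=1}^{m}(4k-1)-\beta_{l}(m)\prod_{k=1}^{m}(4k+1)\right),$$ where $$\alpha_{l}(m)=\sum_{t=0}^{\lfloor l/2\rfloor}\binom{l}{2t}\prod_{\nu=m+1}^{m+t}(4\nu-1)\prod_{\nu=m-l+2t+1}^{m}(2\nu+1)\prod_{\nu=1}^{t-1}(4\nu+1),$$ $$\beta_{l}(m)=\sum_{t=1}^{\lfloor (l+1)/2\rfloor}\binom{l}{2t-1}\prod_{\nu=m+1}^{m+t-1}(4\nu+1)\prod_{\nu=m-l+2t}^{m}(2\nu+1)\prod_{\nu=1}^{t-1}(4\nu-1).$$ In particular $m!\,2^{m+1}d_{1,m}=(2m+1)\prod_{k=1}^{m}(4k-1)-\prod_{k=1}^{m}(4k+1)$; here $\alpha_l$ and $\beta_l$ are polynomials in $m$ of degrees $l$ and $l-1$ respectively.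
   Context: $d_{l,m}=2^{-2m}\sum_{k=l}^{m}2^{k}\binom{2m-2k}{m-k}\binom{m+k}{m}\binom{k}{l}$. Empty products (upper index smaller than lower index) equal $1$ and empty sums equal $0$. *)

theory Defs
  imports "HOL-Computational_Algebra.Polynomial"
begin

text \<open>Products over integer ranges {a..b}; empty (=1) when b < a.\<close>

definition dd :: "nat \<Rightarrow> nat \<Rightarrow> real" where
  "dd l m = (1 / 2 ^ (2*m)) *
     (\<Sum>k = l..m. 2 ^ k * real ((2*m - 2*k) choose (m - k)) * real ((m + k) choose m)
                   * real (k choose l))"

definition alpha :: "nat \<Rightarrow> nat \<Rightarrow> real" where
  "alpha l m = (\<Sum>t = 0..l div 2. real (l choose (2*t))
     * (\<Prod>\<nu>\<in>{int m + 1 .. int m + int t}. real_of_int (4*\<nu> - 1))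
     * (\<Prod>\<nu>\<in>{int m - int l + 2 * int t + 1 .. int m}. real_of_int (2*\<nu> + 1))
     * (\<Prod>\<nu>\<in>{1 .. int t - 1}. real_of_int (4*\<nu> + 1)))"

definition beta :: "nat \<Rightarrow> nat \<Rightarrow> real" where
  "beta l m = (\<Sum>t = 1..(l + 1) div 2. real (l choose (2*t - 1))
     * (\<Prod>\<nu>\<in>{int m + 1 .. int m + int t - 1}. real_of_int (4*\<nu> + 1))
     * (\<Prod>\<nu>\<in>{int m - int l + 2 * int t .. int m}. real_of_int (2*\<nu> + 1))
     * (\<Prod>\<nu>\<in>{1 .. int t - 1}. real_of_int (4*\<nu> - 1)))"

end

theory Submission
  imports Defs
begin

(* Write dterm m k = 2^k C(2m-2k,m-k) C(m+k,m), so that d(l,m) = 4^(-m) * sum_k dterm m k C(k,l),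
   and put D_m(l) = l! m! 2^(m+l) d(l,m). For fixed m we show that both D_m(l) and
   alpha_l(m) P(m) - beta_l(m) R(m), with P(m) = prod (4k-1) and R(m) = prod (4k+1), satisfy
       X(l+2) = 2(2m+1) X(l+1) + ((2l+1)^2 - (2m+1)^2) X(l)
   and agree for l = 0 and l = 1.
   (1) The binomial moments sum_k dterm m k C(k,l) satisfy a three-term recurrence in l, proved
       by telescoping with an explicit (Wilf-Zeilberger style) certificate.  The initial values
       need sum_k dterm m k and sum_k (2m+1-2k) dterm m k; these obey first-order recurrences
       in m, again by telescoping, and equal 2^m P(m) / m! and 2^m R(m) / m!.
   (2) alpha_l(m) and beta_l(m) are binomial convolutions sum_j C(l,j) s_j Q_(l-j) of sequences
       with s_(j+2) = (4m+2j+3)(2j+1) s_j against Q_n = prod_(i<n) (2m+1-2i); every such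
       convolution obeys the recurrence above.
   (3) Reading alpha_l and beta_l as sums of products of linear polynomials in m, the leading
       summand has degree l resp. l-1 and all others have smaller degree. *)

(* Pascal's rule would unfold every binomial coefficient with successor arguments;
   all computations below work with closed binomial coefficients. *)
declare binomial_Suc_Suc [simp del]

lemma binomial_Suc_Suc_real:
  "real (Suc k) * real (Suc n choose Suc k) = real (Suc n) * real (n choose k)"
  by (metis Suc_times_binomial of_nat_mult)

lemma binomial_Suc_real:
  "(real n + 1 - real k) * real (Suc n choose k) = (real n + 1) * real (n choose k)"
proof (cases "k \<le> Suc n")
  case True
  have "(Suc n - k) * (Suc n choose k) = Suc n * (n choose k)"
    using binomial_absorb_comp[of "Suc n" k] by simp
  then have "real (Suc n - k) * real (Suc n choose k) = real (Suc n) * real (n choose k)"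
    by (metis of_nat_mult)
  with True show ?thesis by (simp add: of_nat_diff ac_simps)
qed (simp add: binomial_eq_0)

lemma binomial_Suc_right_real:
  "real (Suc l) * real (k choose Suc l) = (real k - real l) * real (k choose l)"
proof (cases k)
  case (Suc n)
  have "real (Suc l) * real (Suc n choose Suc l) = real (Suc n) * real (n choose l)"
    by (rule binomial_Suc_Suc_real)
  also have "\<dots> = (real n + 1 - real l) * real (Suc n choose l)"
    using binomial_Suc_real[of n l] by simp
  finally show ?thesis unfolding Suc by simp
qed (cases l; simp)

lemma central_binomial_Suc:
  "(real j + 1) * real ((2*j+2) choose (j+1)) = 2 * (2*real j + 1) * real ((2*j) choose j)"
proof -
  have a: "(real j + 1) * real (Suc (Suc (2*j)) choose Suc j) = (2*real j + 2) * real (Suc (2*j) choose j)"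
    using binomial_Suc_Suc_real[of j "Suc (2*j)"] by (simp add: ac_simps)
  have b: "(real j + 1) * real (Suc (2*j) choose j) = (2*real j + 1) * real ((2*j) choose j)"
    using binomial_Suc_real[of "2*j" j] by (simp add: ac_simps)
  have "(real j + 1) * ((real j + 1) * real (Suc (Suc (2*j)) choose Suc j))
      = (real j + 1) * (2 * (2*real j + 1) * real ((2*j) choose j))"
    unfolding a using b by (simp add: algebra_simps)
  then show ?thesis by (simp add: numeral_eq_Suc)
qed

lemma telescoping_sum:
  fixes F H G :: "nat \<Rightarrow> real"
  assumes step: "\<And>k. k < n \<Longrightarrow> F k - H k = G (Suc k) - G k"
    and last: "F n = - G n" and start: "G 0 = 0"
  shows "(\<Sum>k\<le>n. F k) = (\<Sum>k<n. H k)"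
proof -
  have "(\<Sum>k<n. F k) = (\<Sum>k<n. H k + (G (Suc k) - G k))"
    by (rule sum.cong) (auto simp: step[symmetric])
  also have "\<dots> = (\<Sum>k<n. H k) + (G n - G 0)"
    by (simp add: sum.distrib sum_lessThan_telescope)
  finally show ?thesis
    using last start by (simp add: lessThan_Suc_atMost[symmetric])
qed

lemma fact_mult_first_order:
  fixes S r :: "nat \<Rightarrow> real"
  assumes "S 0 = 1" and "\<And>m. real (Suc m) * S (Suc m) = 2 * r (Suc m) * S m"
  shows "fact m * S m = 2^m * (\<Prod>k=1..m. r k)"
proof (induction m)
  case 0
  then show ?case using assms(1) by simp
next
  case (Suc m)
  have "fact (Suc m) * S (Suc m) = fact m * (real (Suc m) * S (Suc m))" by simp
  also have "\<dots> = 2 * r (Suc m) * (fact m * S m)" unfolding assms(2) by (simp only: mult_ac)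
  finally show ?case unfolding Suc.IH by (simp add: prod.nat_ivl_Suc')
qed

lemma sum_atMost_image:
  fixes f :: "nat \<Rightarrow> 'a::comm_monoid_add" and g :: "'b \<Rightarrow> nat"
  assumes inj: "inj_on g T" and img: "g ` T = {j. j \<le> l \<and> P j}"
    and zero: "\<And>j. \<not> P j \<Longrightarrow> f j = 0"
  shows "(\<Sum>j\<le>l. f j) = (\<Sum>t\<in>T. f (g t))"
proof -
  have "(\<Sum>j\<le>l. f j) = sum f {j. j \<le> l \<and> P j}"
    by (rule sum.mono_neutral_right) (auto simp: zero)
  also have "\<dots> = (\<Sum>t\<in>T. f (g t))"
    unfolding img[symmetric] sum.reindex[OF inj] by simp
  finally show ?thesis .
qed

lemma sum_atMost_even:
  fixes f :: "nat \<Rightarrow> 'a::comm_monoid_add"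
  assumes "\<And>j. odd j \<Longrightarrow> f j = 0"
  shows "(\<Sum>j\<le>l. f j) = (\<Sum>t=0..l div 2. f (2*t))"
proof (rule sum_atMost_image[where P = even])
  show "(\<lambda>t. 2*t) ` {0..l div 2} = {j. j \<le> l \<and> even j}"
  proof (intro equalityI subsetI)
    fix j assume "j \<in> {j. j \<le> l \<and> even j}"
    then have "j = 2 * (j div 2)" "j div 2 \<in> {0..l div 2}" by (auto intro: div_le_mono)
    then show "j \<in> (\<lambda>t. 2*t) ` {0..l div 2}" by blast
  qed auto
qed (auto simp: inj_on_def assms)

lemma sum_atMost_odd:
  fixes f :: "nat \<Rightarrow> 'a::comm_monoid_add"
  assumes "\<And>j. even j \<Longrightarrow> f j = 0"
  shows "(\<Sum>j\<le>l. f j) = (\<Sum>t=1..(l+1) div 2. f (2*t - 1))"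
proof (rule sum_atMost_image[where P = odd])
  show "(\<lambda>t. 2*t - 1) ` {1..(l+1) div 2} = {j. j \<le> l \<and> odd j}"
  proof (intro equalityI subsetI)
    fix j assume "j \<in> {j. j \<le> l \<and> odd j}"
    then have "j = 2 * ((j+1) div 2) - 1" "(j+1) div 2 \<in> {1..(l+1) div 2}"
      by (auto intro: div_le_mono elim!: oddE)
    then show "j \<in> (\<lambda>t. 2*t - 1) ` {1..(l+1) div 2}" by blast
  qed auto
qed (auto simp: inj_on_def assms)

definition binom_conv :: "(nat \<Rightarrow> real) \<Rightarrow> (nat \<Rightarrow> real) \<Rightarrow> nat \<Rightarrow> real" where
  "binom_conv s Q l = (\<Sum>j\<le>l. real (l choose j) * s j * Q (l - j))"

(* Leibniz rule: the convolution behaves like the l-th derivative of a product. *)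
lemma binom_conv_Suc:
  "binom_conv s Q (Suc l) = binom_conv s (\<lambda>n. Q (Suc n)) l + binom_conv (\<lambda>j. s (Suc j)) Q l"
proof -
  have "binom_conv s Q (Suc l)
      = s 0 * Q (Suc l) + (\<Sum>j\<le>l. real (Suc l choose Suc j) * s (Suc j) * Q (l - j))"
    unfolding binom_conv_def sum.atMost_Suc_shift by simp
  also have "\<dots> = (s 0 * Q (Suc l) + (\<Sum>j\<le>l. real (l choose Suc j) * s (Suc j) * Q (l - j)))
                  + binom_conv (\<lambda>j. s (Suc j)) Q l"
    unfolding binom_conv_def add.assoc sum.distrib[symmetric]
    by (simp add: binomial_Suc_Suc algebra_simps)
  also have "s 0 * Q (Suc l) + (\<Sum>j\<le>l. real (l choose Suc j) * s (Suc j) * Q (l - j))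
      = (\<Sum>j\<le>Suc l. real (l choose j) * s j * Q (Suc l - j))"
    unfolding sum.atMost_Suc_shift by simp
  also have "\<dots> = binom_conv s (\<lambda>n. Q (Suc n)) l"
    unfolding binom_conv_def sum.atMost_Suc by (simp add: Suc_diff_le)
  finally show ?thesis .
qed

(* Index shift, from C(l,j)(l-j) = C(l,j+1)(j+1). *)
lemma binom_conv_shift:
  "(\<Sum>j\<le>l. real (l choose j) * (real l - real j) * s (Suc j) * Q (l - j))
     = (\<Sum>j\<le>l. real (l choose j) * real j * s j * Q (Suc (l - j)))"
proof -
  define f where "f j = real (l choose j) * real j * s j * Q (Suc l - j)" for j
  have "(\<Sum>j\<le>l. real (l choose j) * real j * s j * Q (Suc (l - j))) = (\<Sum>j\<le>Suc l. f j)"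
    unfolding f_def by (simp add: Suc_diff_le)
  also have "\<dots> = (\<Sum>j\<le>l. f (Suc j))"
    unfolding sum.atMost_Suc_shift by (simp add: f_def)
  also have "\<dots> = (\<Sum>j\<le>l. real (l choose j) * (real l - real j) * s (Suc j) * Q (l - j))"
  proof (rule sum.cong[OF refl])
    fix j
    have "f (Suc j) = (real (Suc j) * real (l choose Suc j)) * s (Suc j) * Q (l - j)"
      unfolding f_def by (simp only: diff_Suc_Suc mult_ac)
    then show "f (Suc j) = real (l choose j) * (real l - real j) * s (Suc j) * Q (l - j)"
      unfolding binomial_Suc_right_real by (simp only: mult_ac)
  qed
  finally show ?thesis ..
qed

lemma binom_conv_rec:
  fixes c :: real
  assumes s: "\<And>j. s (Suc (Suc j)) = (2*c + 2*real j + 1) * (2*real j + 1) * s j"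
    and Q: "\<And>n. Q (Suc n) = (c - 2*real n) * Q n"
  shows "binom_conv s Q (Suc (Suc l))
           = 2*c * binom_conv s Q (Suc l) + ((2*real l + 1)^2 - c^2) * binom_conv s Q l"
proof -
  define e where "e = (2*real l + 1)^2 - c^2"
  have "binom_conv s Q (Suc (Suc l)) - 2*c * binom_conv s Q (Suc l) - e * binom_conv s Q l
     = (\<Sum>j\<le>l. real (l choose j) * s j * Q (Suc (Suc (l-j)))
          + 2 * (real (l choose j) * s (Suc j) * Q (Suc (l-j)))
          + real (l choose j) * s (Suc (Suc j)) * Q (l-j)
          - 2*c * (real (l choose j) * s j * Q (Suc (l-j)) + real (l choose j) * s (Suc j) * Q (l-j))
          - e * (real (l choose j) * s j * Q (l-j)))"
    unfolding binom_conv_Suc by (simp add: binom_conv_def sum.distrib sum_subtractf sum_distrib_left distrib_left)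
  also have "\<dots> = 4 * (\<Sum>j\<le>l. real (l choose j) * real j * s j * Q (Suc (l-j)))
       - 4 * (\<Sum>j\<le>l. real (l choose j) * (real l - real j) * s (Suc j) * Q (l-j))"
    unfolding sum_distrib_left sum_subtractf[symmetric]
  proof (rule sum.cong[OF refl])
    fix j assume "j \<in> {..l}"
    then have rn: "real (l - j) = real l - real j" by (simp add: of_nat_diff)
    show "real (l choose j) * s j * Q (Suc (Suc (l-j))) + 2 * (real (l choose j) * s (Suc j) * Q (Suc (l-j)))
          + real (l choose j) * s (Suc (Suc j)) * Q (l-j)
          - 2*c * (real (l choose j) * s j * Q (Suc (l-j)) + real (l choose j) * s (Suc j) * Q (l-j))
          - e * (real (l choose j) * s j * Q (l-j))
        = 4 * (real (l choose j) * real j * s j * Q (Suc (l-j)))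
          - 4 * (real (l choose j) * (real l - real j) * s (Suc j) * Q (l-j))"
      unfolding Q[of "Suc (l-j)"] Q[of "l-j"] s e_def by (simp add: rn algebra_simps power2_eq_square)
  qed
  also have "\<dots> = 0" unfolding binom_conv_shift by simp
  finally show ?thesis unfolding e_def by simp
qed

definition arith_prod :: "real \<Rightarrow> real \<Rightarrow> nat \<Rightarrow> real" where
  "arith_prod x h n = (\<Prod>i<n. x + h * real i)"

lemma arith_prod_Suc: "arith_prod x h (Suc n) = arith_prod x h n * (x + h * real n)"
  by (simp add: arith_prod_def)

lemma arith_prod_step: "arith_prod c (-2) (Suc n) = (c - 2*real n) * arith_prod c (-2) n"
  by (simp add: arith_prod_Suc)

lemma prod_int_interval_up:
  "(\<Prod>\<nu>\<in>{a + 1..a + int n}. f \<nu>) = (\<Prod>i<n. f (a + 1 + int i))"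
proof (induction n)
  case (Suc n)
  have "{a + 1..a + int (Suc n)} = insert (a + 1 + int n) {a + 1..a + int n}" by auto
  then show ?case using Suc by (simp add: mult.commute)
qed simp

lemma prod_int_interval_down:
  "(\<Prod>\<nu>\<in>{b - int n + 1..b}. f \<nu>) = (\<Prod>i<n. f (b - int i))"
proof (induction n)
  case (Suc n)
  have "{b - int (Suc n) + 1..b} = insert (b - int n) {b - int n + 1..b}" by auto
  then show ?case using Suc by (simp add: mult.commute)
qed simp

definition lin_prod :: "real \<Rightarrow> real \<Rightarrow> real \<Rightarrow> nat \<Rightarrow> real poly" where
  "lin_prod a b h n = (\<Prod>i<n. [:b + h * real i, a:])"

lemma poly_lin_prod: "poly (lin_prod a b h n) y = arith_prod (a*y + b) h n"
  unfolding lin_prod_def arith_prod_def poly_prod by (intro prod.cong) (simp_all add: algebra_simps)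

lemma degree_lin_prod: "a \<noteq> 0 \<Longrightarrow> degree (lin_prod a b h n) = n"
  unfolding lin_prod_def by (subst degree_prod_sum_eq) auto

lemma degree_sum_dominant:
  fixes f :: "'a \<Rightarrow> 'b::comm_ring_1 poly"
  assumes "finite T" "t0 \<in> T" and smaller: "\<And>t. t \<in> T - {t0} \<Longrightarrow> degree (f t) < degree (f t0)"
  shows "degree (\<Sum>t\<in>T. f t) = degree (f t0)"
proof (cases "T - {t0} = {}")
  case True
  with assms(2) have "T = {t0}" by blast
  then show ?thesis by simp
next
  case False
  then have "degree (f t0) > 0" using smaller by fastforce
  then have "degree (\<Sum>t\<in>T - {t0}. f t) < degree (f t0)" by (intro degree_sum_less smaller)
  then show ?thesis
    unfolding sum.remove[OF assms(1,2)] by (rule degree_add_eq_left)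
qed

definition dterm :: "nat \<Rightarrow> nat \<Rightarrow> real" where
  "dterm m k = 2^k * real ((2*m-2*k) choose (m-k)) * real ((m+k) choose m)"

(* dterm with m = k + j, which removes the truncated subtractions. *)
lemma dterm_param: "dterm (k + j) k = 2^k * real ((2*j) choose j) * real ((2*k + j) choose (k + j))"
  unfolding dterm_def by (simp add: mult_2 add.commute add.left_commute)

lemma dterm_Suc_m:
  assumes "k \<le> m"
  shows "(real m + 1 - real k) * (real m + 1) * dterm (Suc m) k
       = 2 * (2*real m + 1 - 2*real k) * (real m + real k + 1) * dterm m k"
proof -
  obtain j where m: "m = k + j" using assms le_Suc_ex by blast
  define C C' B B' where "C = real ((2*j) choose j)" and "C' = real ((2*j+2) choose (j+1))"
    and "B = real ((2*k + j) choose (k + j))" and "B' = real (Suc (2*k+j) choose Suc (k+j))"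
  have c: "(real j + 1) * C' = 2 * (2*real j + 1) * C"
    unfolding C_def C'_def by (rule central_binomial_Suc)
  have b: "(real k + real j + 1) * B' = (2*real k + real j + 1) * B"
    unfolding B_def B'_def using binomial_Suc_Suc_real[of "k+j" "2*k+j"] by (simp add: ac_simps)
  have rm: "real m = real k + real j" unfolding m by simp
  have dterm_Suc: "dterm (Suc m) k = 2^k * C' * B'"
    using dterm_param[of k "Suc j"] unfolding m C'_def B'_def by (simp add: ac_simps)
  have dterm_m: "dterm m k = 2^k * C * B"
    using dterm_param unfolding m C_def B_def by simp
  have "(real m + 1 - real k) * (real m + 1) * dterm (Suc m) k
      = 2^k * ((real j + 1) * C') * ((real k + real j + 1) * B')"
    unfolding dterm_Suc rm by (simp add: algebra_simps)
  also have "\<dots> = 2 * (2*real m + 1 - 2*real k) * (real m + real k + 1) * dterm m k"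
    unfolding c b dterm_m rm by (simp add: algebra_simps)
  finally show ?thesis .
qed

lemma dterm_Suc_Suc:
  assumes "k \<le> m"
  shows "(real k + 1) * (real m + 1) * dterm (Suc m) (Suc k)
       = 2 * (real m + real k + 1) * (real m + real k + 2) * dterm m k"
proof -
  obtain j where m: "m = k + j" using assms le_Suc_ex by blast
  define C B D E where "C = real ((2*j) choose j)" and "B = real ((2*k + j) choose (k + j))"
    and "D = real (Suc (Suc (2*k+j)) choose Suc (k+j))" and "E = real (Suc (2*k+j) choose (k+j))"
  have d: "(real k + real j + 1) * D = (2*real k + real j + 2) * E"
    unfolding D_def E_def using binomial_Suc_Suc_real[of "k+j" "Suc (2*k+j)"] by (simp add: ac_simps)
  have e: "(real k + 1) * E = (2*real k + real j + 1) * B"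
    unfolding E_def B_def using binomial_Suc_real[of "2*k+j" "k+j"] by (simp add: ac_simps)
  have rm: "real m = real k + real j" unfolding m by simp
  have dterm_Suc: "dterm (Suc m) (Suc k) = 2^Suc k * C * D"
    using dterm_param[of "Suc k" j] unfolding m C_def D_def by (simp add: ac_simps)
  have dterm_m: "dterm m k = 2^k * C * B"
    using dterm_param unfolding m C_def B_def by simp
  have "(real k + 1) * (real m + 1) * dterm (Suc m) (Suc k)
      = 2 * 2^k * C * (real k + 1) * ((real k + real j + 1) * D)"
    unfolding dterm_Suc rm by (simp add: algebra_simps)
  also have "\<dots> = 2 * 2^k * C * (2*real k + real j + 2) * ((real k + 1) * E)"
    unfolding d by (simp add: algebra_simps)
  also have "\<dots> = 2 * (real m + real k + 1) * (real m + real k + 2) * dterm m k"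
    unfolding e dterm_m rm by (simp add: algebra_simps)
  finally show ?thesis .
qed

lemma dterm_Suc_k:
  assumes "k < m"
  shows "(real k + 1) * (2*real m - 2*real k - 1) * dterm m (Suc k)
       = (real m - real k) * (real m + real k + 1) * dterm m k"
proof -
  obtain j where m: "m = Suc k + j" using assms less_iff_Suc_add by blast
  define C C' B' D where "C = real ((2*j) choose j)" and "C' = real ((2*j+2) choose (j+1))"
    and "B' = real (Suc (2*k+j) choose Suc (k+j))" and "D = real (Suc (Suc (2*k+j)) choose Suc (k+j))"
  have c: "(real j + 1) * C' = 2 * (2*real j + 1) * C"
    unfolding C_def C'_def by (rule central_binomial_Suc)
  have d: "(real k + 1) * D = (2*real k + real j + 2) * B'"
    unfolding D_def B'_def using binomial_Suc_real[of "Suc (2*k+j)" "Suc (k+j)"] by (simp add: ac_simps)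
  have rm: "real m = real k + real j + 1" unfolding m by simp
  have dterm_Suc: "dterm m (Suc k) = 2^Suc k * C * D"
    using dterm_param[of "Suc k" j] unfolding m C_def D_def by (simp add: ac_simps)
  have dterm_m: "dterm m k = 2^k * C' * B'"
    using dterm_param[of k "Suc j"] unfolding m C'_def B'_def by (simp add: ac_simps)
  have "(real k + 1) * (2*real m - 2*real k - 1) * dterm m (Suc k)
      = 2^k * (2 * (2*real j + 1) * C) * ((real k + 1) * D)"
    unfolding dterm_Suc rm by (simp add: algebra_simps)
  also have "\<dots> = (real m - real k) * (real m + real k + 1) * dterm m k"
    unfolding c[symmetric] d dterm_m rm by (simp add: algebra_simps)
  finally show ?thesis .
qed

(* Certificate for the recurrences in m of the sums of dterm; by dterm_Suc_Suc its
   successor value is wz_cert m (k+1) = -4 (m+k+1) dterm m k. *)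
definition wz_cert :: "nat \<Rightarrow> nat \<Rightarrow> real" where
  "wz_cert m k = - 2 * real k * (real m + 1) / (real m + real k + 1) * dterm (Suc m) k"

lemma wz_cert_0: "wz_cert m 0 = 0"
  by (simp add: wz_cert_def)

lemma wz_cert_last: "real (Suc m) * dterm (Suc m) (Suc m) = - wz_cert m (Suc m)"
proof -
  have "real m + real (Suc m) + 1 = 2 * (real m + 1)" by simp
  then show ?thesis unfolding wz_cert_def by (simp add: field_simps)
qed

lemma wz_cert_Suc:
  assumes "k \<le> m"
  shows "wz_cert m (Suc k) = - 4 * (real m + real k + 1) * dterm m k"
proof -
  have "wz_cert m (Suc k) = - 2 / (real m + real k + 2) * ((real k + 1) * (real m + 1) * dterm (Suc m) (Suc k))"
    unfolding wz_cert_def by (simp add: field_simps)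
  also have "\<dots> = - 4 * (real m + real k + 1) * dterm m k"
    unfolding dterm_Suc_Suc[OF assms] by (simp add: field_simps)
  finally show ?thesis .
qed

lemma wz_cert_scaled: "(real m + real k + 1) * wz_cert m k = - 2 * real k * (real m + 1) * dterm (Suc m) k"
  unfolding wz_cert_def by (simp add: field_simps)

(* The certificate identities; both reduce to dterm_Suc_m after clearing (m+k+1). *)
lemma dterm_step:
  assumes "k \<le> m"
  shows "real (Suc m) * dterm (Suc m) k - 2 * (4*real m + 3) * dterm m k = wz_cert m (Suc k) - wz_cert m k"
proof -
  have pos: "real m + real k + 1 \<noteq> 0" by (simp add: add_pos_nonneg)
  have "(real m + real k + 1) * (real (Suc m) * dterm (Suc m) k - 2 * (4*real m + 3) * dterm m k - (wz_cert m (Suc k) - wz_cert m k))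
      = (real m + 1 - real k) * (real m + 1) * dterm (Suc m) k
        - 2 * (2*real m + 1 - 2*real k) * (real m + real k + 1) * dterm m k"
    unfolding wz_cert_Suc[OF assms] right_diff_distrib wz_cert_scaled by (simp add: algebra_simps)
  also have "\<dots> = 0" by (simp add: dterm_Suc_m[OF assms])
  finally show ?thesis using pos by simp
qed

lemma dterm_weighted_step:
  assumes "k \<le> m"
  shows "real (Suc m) * (2*real m + 3 - 2*real k) * dterm (Suc m) k
           - 2 * (4*real m + 5) * (2*real m + 1 - 2*real k) * dterm m k
       = (2*real m + 3 - 2*real (Suc k)) * wz_cert m (Suc k) - (2*real m + 3 - 2*real k) * wz_cert m k"
proof -
  have pos: "real m + real k + 1 \<noteq> 0" by (simp add: add_pos_nonneg)
  have "(real m + real k + 1) * (real (Suc m) * (2*real m + 3 - 2*real k) * dterm (Suc m) k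
           - 2 * (4*real m + 5) * (2*real m + 1 - 2*real k) * dterm m k
           - ((2*real m + 3 - 2*real (Suc k)) * wz_cert m (Suc k) - (2*real m + 3 - 2*real k) * wz_cert m k))
      = (2*real m + 3 - 2*real k) * ((real m + 1 - real k) * (real m + 1) * dterm (Suc m) k
        - 2 * (2*real m + 1 - 2*real k) * (real m + real k + 1) * dterm m k)"
  proof -
    have "(real m + real k + 1) * ((2*real m + 3 - 2*real k) * wz_cert m k)
        = (2*real m + 3 - 2*real k) * (- 2 * real k * (real m + 1) * dterm (Suc m) k)"
      by (simp only: mult.left_commute[of "real m + real k + 1"] wz_cert_scaled)
    then show ?thesis unfolding wz_cert_Suc[OF assms] by (simp add: algebra_simps)
  qed
  also have "\<dots> = 0" by (simp add: dterm_Suc_m[OF assms])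
  finally show ?thesis using pos by simp
qed

definition sum_dterm :: "nat \<Rightarrow> real" where
  "sum_dterm m = (\<Sum>k\<le>m. dterm m k)"

definition sum_dterm_weighted :: "nat \<Rightarrow> real" where
  "sum_dterm_weighted m = (\<Sum>k\<le>m. (2*real m + 1 - 2*real k) * dterm m k)"

lemma sum_dterm_rec: "real (Suc m) * sum_dterm (Suc m) = 2 * (4*real m + 3) * sum_dterm m"
proof -
  have "(\<Sum>k\<le>Suc m. real (Suc m) * dterm (Suc m) k) = (\<Sum>k<Suc m. 2 * (4*real m + 3) * dterm m k)"
  proof (rule telescoping_sum[where G = "wz_cert m"])
    show "real (Suc m) * dterm (Suc m) k - 2 * (4*real m + 3) * dterm m k = wz_cert m (Suc k) - wz_cert m k"
      if "k < Suc m" for k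
      using dterm_step[of k m] that by simp
  qed (use wz_cert_last[of m] in \<open>simp_all add: wz_cert_0\<close>)
  then show ?thesis unfolding sum_dterm_def sum_distrib_left lessThan_Suc_atMost .
qed

lemma sum_dterm_weighted_rec:
  "real (Suc m) * sum_dterm_weighted (Suc m) = 2 * (4*real m + 5) * sum_dterm_weighted m"
proof -
  have "(\<Sum>k\<le>Suc m. real (Suc m) * ((2*real (Suc m) + 1 - 2*real k) * dterm (Suc m) k))
      = (\<Sum>k<Suc m. 2 * (4*real m + 5) * ((2*real m + 1 - 2*real k) * dterm m k))"
  proof (rule telescoping_sum[where G = "\<lambda>k. (2*real m + 3 - 2*real k) * wz_cert m k"])
    show "real (Suc m) * ((2*real (Suc m) + 1 - 2*real k) * dterm (Suc m) k)
          - 2 * (4*real m + 5) * ((2*real m + 1 - 2*real k) * dterm m k)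
        = (2*real m + 3 - 2*real (Suc k)) * wz_cert m (Suc k) - (2*real m + 3 - 2*real k) * wz_cert m k"
      if "k < Suc m" for k
      using dterm_weighted_step[of k m] that by (simp add: algebra_simps)
  qed (use wz_cert_last[of m] in \<open>simp_all add: wz_cert_0\<close>)
  then show ?thesis
    unfolding sum_dterm_weighted_def sum_distrib_left lessThan_Suc_atMost .
qed

lemma sum_dterm_closed: "fact m * sum_dterm m = 2^m * (\<Prod>k=1..m. real (4*k - 1))"
proof (rule fact_mult_first_order)
  show "sum_dterm 0 = 1" by (simp add: sum_dterm_def dterm_def)
  show "real (Suc m) * sum_dterm (Suc m) = 2 * real (4 * Suc m - 1) * sum_dterm m" for m
    unfolding sum_dterm_rec by simp
qed

lemma sum_dterm_weighted_closed: "fact m * sum_dterm_weighted m = 2^m * (\<Prod>k=1..m. real (4*k + 1))"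
proof (rule fact_mult_first_order)
  show "sum_dterm_weighted 0 = 1" by (simp add: sum_dterm_weighted_def dterm_def)
  show "real (Suc m) * sum_dterm_weighted (Suc m) = 2 * real (4 * Suc m + 1) * sum_dterm_weighted m" for m
    unfolding sum_dterm_weighted_rec by simp
qed

definition binom_moment :: "nat \<Rightarrow> nat \<Rightarrow> real" where
  "binom_moment m l = (\<Sum>k\<le>m. dterm m k * real (k choose l))"

(* Certificate for the recurrence in l of the binomial moments. *)
definition moment_cert :: "nat \<Rightarrow> nat \<Rightarrow> nat \<Rightarrow> real" where
  "moment_cert m l k = 2 * (2*real m - 2*real k + 1) * (real k - real l) * dterm m k * real (k choose l)"

lemma moment_cert_Suc:
  assumes "k < m"
  shows "moment_cert m l (Suc k) = 2 * (real m - real k) * (real m + real k + 1) * dterm m k * real (k choose l)"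
proof -
  have "moment_cert m l (Suc k)
      = 2 * (2*real m - 2*real k - 1) * dterm m (Suc k) * ((real k + 1 - real l) * real (Suc k choose l))"
    unfolding moment_cert_def by (simp add: algebra_simps)
  also have "\<dots> = 2 * real (k choose l) * ((real k + 1) * (2*real m - 2*real k - 1) * dterm m (Suc k))"
    unfolding binomial_Suc_real by (simp add: mult_ac)
  also have "\<dots> = 2 * (real m - real k) * (real m + real k + 1) * dterm m k * real (k choose l)"
    unfolding dterm_Suc_k[OF assms] by (simp add: mult_ac)
  finally show ?thesis .
qed

(* The polynomial weight of C(k,l) produced by the recurrence of the binomial moments. *)
definition moment_kernel :: "nat \<Rightarrow> nat \<Rightarrow> nat \<Rightarrow> real" where
  "moment_kernel m l k = 2 * (real k - real l) * (real k - real l - 1) - (4*real m + 2) * (real k - real l)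
       - 2 * (real l - real m) * (real l + real m + 1)"

lemma binomial_moment_combination:
  "2 * real (Suc (Suc l)) * real (Suc l) * real (k choose Suc (Suc l))
     - (4*real m + 2) * real (Suc l) * real (k choose Suc l)
     - 2 * (real l - real m) * (real l + real m + 1) * real (k choose l)
   = moment_kernel m l k * real (k choose l)"
proof -
  have "real (Suc (Suc l)) * real (Suc l) * real (k choose Suc (Suc l))
      = real (Suc l) * (real (Suc (Suc l)) * real (k choose Suc (Suc l)))" by (simp only: mult_ac)
  also have "\<dots> = (real k - real l - 1) * (real (Suc l) * real (k choose Suc l))"
    unfolding binomial_Suc_right_real[of "Suc l" k] by (simp add: algebra_simps)
  also have "\<dots> = (real k - real l - 1) * (real k - real l) * real (k choose l)"
    unfolding binomial_Suc_right_real by simp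
  finally have two_steps: "real (Suc (Suc l)) * real (Suc l) * real (k choose Suc (Suc l))
      = (real k - real l - 1) * (real k - real l) * real (k choose l)" .
  show ?thesis
    unfolding mult.assoc[of 2] two_steps mult.assoc[of "4*real m + 2"] binomial_Suc_right_real
    by (simp add: moment_kernel_def algebra_simps)
qed

lemma moment_kernel_sum: "(\<Sum>k\<le>m. dterm m k * real (k choose l) * moment_kernel m l k) = 0"
proof -
  have "(\<Sum>k\<le>m. dterm m k * real (k choose l) * moment_kernel m l k) = (\<Sum>k<m. 0)"
  proof (rule telescoping_sum[where G = "moment_cert m l"])
    show "dterm m k * real (k choose l) * moment_kernel m l k - 0 = moment_cert m l (Suc k) - moment_cert m l k"
      if "k < m" for k
      unfolding moment_cert_Suc[OF that] by (simp add: moment_cert_def moment_kernel_def algebra_simps)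
    show "dterm m m * real (m choose l) * moment_kernel m l m = - moment_cert m l m"
      by (simp add: moment_cert_def moment_kernel_def algebra_simps)
    show "moment_cert m l 0 = 0" by (cases l) (simp_all add: moment_cert_def)
  qed
  then show ?thesis by simp
qed

lemma binom_moment_rec:
  "2 * real (Suc (Suc l)) * real (Suc l) * binom_moment m (Suc (Suc l))
     = (4*real m + 2) * real (Suc l) * binom_moment m (Suc l)
       + 2 * (real l - real m) * (real l + real m + 1) * binom_moment m l"
proof -
  have "2 * real (Suc (Suc l)) * real (Suc l) * binom_moment m (Suc (Suc l))
        - (4*real m + 2) * real (Suc l) * binom_moment m (Suc l)
        - 2 * (real l - real m) * (real l + real m + 1) * binom_moment m l
      = (\<Sum>k\<le>m. dterm m k * (2 * real (Suc (Suc l)) * real (Suc l) * real (k choose Suc (Suc l))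
          - (4*real m + 2) * real (Suc l) * real (k choose Suc l)
          - 2 * (real l - real m) * (real l + real m + 1) * real (k choose l)))"
    unfolding binom_moment_def sum_distrib_left sum_subtractf[symmetric] by (simp add: algebra_simps)
  also have "\<dots> = 0"
    unfolding binomial_moment_combination using moment_kernel_sum by (simp add: mult_ac)
  finally show ?thesis by simp
qed

lemma prod_int_interval_from_1:
  "(\<Prod>\<nu>\<in>{1..int t - 1}. real_of_int (4*\<nu> + c)) = arith_prod (4 + real_of_int c) 4 (t - 1)"
proof -
  have bounds: "{1..int t - 1} = {0 + 1..0 + int (t - 1)}" by (cases t) auto
  show ?thesis
    unfolding bounds arith_prod_def prod_int_interval_up by (intro prod.cong) (simp_all add: algebra_simps)
qed

lemma alpha_arith:
  "alpha l m = (\<Sum>t=0..l div 2. real (l choose (2*t)) * arith_prod (4*real m + 3) 4 t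
                 * arith_prod (2*real m + 1) (-2) (l - 2*t) * arith_prod 5 4 (t - 1))"
  unfolding alpha_def
proof (rule sum.cong[OF refl])
  fix t assume "t \<in> {0..l div 2}"
  then have bounds: "int m - int l + 2 * int t + 1 = int m - int (l - 2*t) + 1" by auto
  have "(\<Prod>\<nu>\<in>{int m + 1 .. int m + int t}. real_of_int (4*\<nu> - 1)) = arith_prod (4*real m + 3) 4 t"
    unfolding prod_int_interval_up arith_prod_def by (intro prod.cong) (simp_all add: algebra_simps)
  moreover have "(\<Prod>\<nu>\<in>{int m - int l + 2 * int t + 1 .. int m}. real_of_int (2*\<nu> + 1))
      = arith_prod (2*real m + 1) (-2) (l - 2*t)"
    unfolding bounds prod_int_interval_down arith_prod_def by (intro prod.cong) (simp_all add: algebra_simps)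
  moreover have "(\<Prod>\<nu>\<in>{1 .. int t - 1}. real_of_int (4*\<nu> + 1)) = arith_prod 5 4 (t - 1)"
    using prod_int_interval_from_1[where c = 1] by simp
  ultimately show "real (l choose (2*t))
     * (\<Prod>\<nu>\<in>{int m + 1 .. int m + int t}. real_of_int (4*\<nu> - 1))
     * (\<Prod>\<nu>\<in>{int m - int l + 2 * int t + 1 .. int m}. real_of_int (2*\<nu> + 1))
     * (\<Prod>\<nu>\<in>{1 .. int t - 1}. real_of_int (4*\<nu> + 1))
   = real (l choose (2*t)) * arith_prod (4*real m + 3) 4 t
     * arith_prod (2*real m + 1) (-2) (l - 2*t) * arith_prod 5 4 (t - 1)"
    by simp
qed

lemma beta_arith:
  "beta l m = (\<Sum>t=1..(l + 1) div 2. real (l choose (2*t - 1)) * arith_prod (4*real m + 5) 4 (t - 1)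
                 * arith_prod (2*real m + 1) (-2) (l - (2*t - 1)) * arith_prod 3 4 (t - 1))"
  unfolding beta_def
proof (rule sum.cong[OF refl])
  fix t assume "t \<in> {1..(l + 1) div 2}"
  then have bounds: "{int m + 1 .. int m + int t - 1} = {int m + 1 .. int m + int (t - 1)}"
    "int m - int l + 2 * int t = int m - int (l - (2*t - 1)) + 1" by auto
  have "(\<Prod>\<nu>\<in>{int m + 1 .. int m + int t - 1}. real_of_int (4*\<nu> + 1)) = arith_prod (4*real m + 5) 4 (t - 1)"
    unfolding bounds prod_int_interval_up arith_prod_def by (intro prod.cong) (simp_all add: algebra_simps)
  moreover have "(\<Prod>\<nu>\<in>{int m - int l + 2 * int t .. int m}. real_of_int (2*\<nu> + 1))
      = arith_prod (2*real m + 1) (-2) (l - (2*t - 1))"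
    unfolding bounds prod_int_interval_down arith_prod_def by (intro prod.cong) (simp_all add: algebra_simps)
  moreover have "(\<Prod>\<nu>\<in>{1 .. int t - 1}. real_of_int (4*\<nu> - 1)) = arith_prod 3 4 (t - 1)"
    using prod_int_interval_from_1[where c = "-1"] by simp
  ultimately show "real (l choose (2*t - 1))
     * (\<Prod>\<nu>\<in>{int m + 1 .. int m + int t - 1}. real_of_int (4*\<nu> + 1))
     * (\<Prod>\<nu>\<in>{int m - int l + 2 * int t .. int m}. real_of_int (2*\<nu> + 1))
     * (\<Prod>\<nu>\<in>{1 .. int t - 1}. real_of_int (4*\<nu> - 1))
   = real (l choose (2*t - 1)) * arith_prod (4*real m + 5) 4 (t - 1)
     * arith_prod (2*real m + 1) (-2) (l - (2*t - 1)) * arith_prod 3 4 (t - 1)"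
    by simp
qed

definition alpha_seq :: "nat \<Rightarrow> nat \<Rightarrow> real" where
  "alpha_seq m j = (if even j then arith_prod (4*real m + 3) 4 (j div 2) * arith_prod 5 4 (j div 2 - 1) else 0)"

definition beta_seq :: "nat \<Rightarrow> nat \<Rightarrow> real" where
  "beta_seq m j = (if odd j then arith_prod (4*real m + 5) 4 (j div 2) * arith_prod 3 4 (j div 2) else 0)"

lemma alpha_conv: "alpha l m = binom_conv (alpha_seq m) (arith_prod (2*real m + 1) (-2)) l"
  unfolding alpha_arith binom_conv_def by (subst sum_atMost_even) (auto simp: alpha_seq_def mult_ac)

lemma beta_conv: "beta l m = binom_conv (beta_seq m) (arith_prod (2*real m + 1) (-2)) l"
proof -
  have "binom_conv (beta_seq m) (arith_prod (2*real m + 1) (-2)) l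
      = (\<Sum>t=1..(l + 1) div 2. real (l choose (2*t - 1)) * beta_seq m (2*t - 1)
           * arith_prod (2*real m + 1) (-2) (l - (2*t - 1)))"
    unfolding binom_conv_def by (rule sum_atMost_odd) (simp add: beta_seq_def)
  also have "\<dots> = beta l m"
    unfolding beta_arith
  proof (rule sum.cong[OF refl])
    fix t assume "t \<in> {1..(l + 1) div 2}"
    then obtain u where "t = Suc u" by (cases t) auto
    then show "real (l choose (2*t - 1)) * beta_seq m (2*t - 1) * arith_prod (2*real m + 1) (-2) (l - (2*t - 1))
        = real (l choose (2*t - 1)) * arith_prod (4*real m + 5) 4 (t - 1)
          * arith_prod (2*real m + 1) (-2) (l - (2*t - 1)) * arith_prod 3 4 (t - 1)"
      by (simp add: beta_seq_def mult_ac)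
  qed
  finally show ?thesis ..
qed

lemma alpha_seq_step:
  "alpha_seq m (Suc (Suc j)) = (2*(2*real m + 1) + 2*real j + 1) * (2*real j + 1) * alpha_seq m j"
proof (cases "even j")
  case True
  then obtain t where j: "j = 2*t" by blast
  have "arith_prod 5 4 t = arith_prod 5 4 (t - 1) * (4*real t + 1)"
    by (cases t) (simp_all add: arith_prod_Suc algebra_simps)
  then show ?thesis unfolding alpha_seq_def j by (simp add: arith_prod_Suc algebra_simps)
qed (simp add: alpha_seq_def)

lemma beta_seq_step:
  "beta_seq m (Suc (Suc j)) = (2*(2*real m + 1) + 2*real j + 1) * (2*real j + 1) * beta_seq m j"
proof (cases "odd j")
  case True
  then obtain t where j: "j = 2*t + 1" by (blast elim: oddE)
  show ?thesis unfolding beta_seq_def j by (simp add: arith_prod_Suc algebra_simps)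
qed (simp add: beta_seq_def)

lemma alpha_rec:
  "alpha (Suc (Suc l)) m = 2 * (2*real m + 1) * alpha (Suc l) m
     + ((2*real l + 1)^2 - (2*real m + 1)^2) * alpha l m"
  unfolding alpha_conv by (rule binom_conv_rec[OF alpha_seq_step arith_prod_step])

lemma beta_rec:
  "beta (Suc (Suc l)) m = 2 * (2*real m + 1) * beta (Suc l) m
     + ((2*real l + 1)^2 - (2*real m + 1)^2) * beta l m"
  unfolding beta_conv by (rule binom_conv_rec[OF beta_seq_step arith_prod_step])

lemma alpha_beta_initial: "alpha 0 m = 1" "beta 0 m = 0" "alpha 1 m = 2*real m + 1" "beta 1 m = 1"
  by (simp_all add: alpha_conv beta_conv binom_conv_def alpha_seq_def beta_seq_def arith_prod_def)

definition scaled_dd :: "nat \<Rightarrow> nat \<Rightarrow> real" where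
  "scaled_dd m l = fact l * fact m * 2^(m + l) * dd l m"

lemma dd_binom_moment: "dd l m = binom_moment m l / 2^(2*m)"
proof -
  have "(\<Sum>k = l..m. 2^k * real ((2*m - 2*k) choose (m - k)) * real ((m + k) choose m) * real (k choose l))
      = (\<Sum>k\<le>m. dterm m k * real (k choose l))"
    unfolding dterm_def by (rule sum.mono_neutral_left) auto
  then show ?thesis unfolding dd_def binom_moment_def by simp
qed

lemma scaled_dd_rec:
  "scaled_dd m (Suc (Suc l)) = 2 * (2*real m + 1) * scaled_dd m (Suc l)
     + ((2*real l + 1)^2 - (2*real m + 1)^2) * scaled_dd m l"
proof -
  define K where "K = fact l * fact m * 2^(m + l + 1) / (2::real)^(2*m)"
  have fact_Suc_Suc: "fact (Suc (Suc l)) = real (Suc (Suc l)) * real (Suc l) * (fact l :: real)" by simp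
  have h2: "scaled_dd m (Suc (Suc l)) = K * (2 * real (Suc (Suc l)) * real (Suc l) * binom_moment m (Suc (Suc l)))"
    unfolding scaled_dd_def dd_binom_moment K_def fact_Suc_Suc by (simp add: mult_ac)
  have h1: "scaled_dd m (Suc l) = K * (real (Suc l) * binom_moment m (Suc l))"
    unfolding scaled_dd_def dd_binom_moment K_def by (simp add: mult_ac)
  have h0: "scaled_dd m l = K * (binom_moment m l / 2)"
    unfolding scaled_dd_def dd_binom_moment K_def by (simp add: mult_ac)
  show ?thesis unfolding h2 h1 h0 binom_moment_rec by (simp add: algebra_simps power2_eq_square)
qed

lemma scaled_dd_0: "scaled_dd m 0 = (\<Prod>k=1..m. real (4*k - 1))"
proof -
  have "scaled_dd m 0 = 2^m * (fact m * sum_dterm m) / (2^m * 2^m)"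
    unfolding scaled_dd_def dd_binom_moment binom_moment_def sum_dterm_def
    by (simp add: power_add[symmetric] mult_2)
  also have "\<dots> = (\<Prod>k=1..m. real (4*k - 1))"
    unfolding sum_dterm_closed by simp
  finally show ?thesis .
qed

lemma scaled_dd_1:
  "scaled_dd m 1 = (2*real m + 1) * (\<Prod>k=1..m. real (4*k - 1)) - (\<Prod>k=1..m. real (4*k + 1))"
proof -
  have moment_1: "2 * binom_moment m 1 = (2*real m + 1) * sum_dterm m - sum_dterm_weighted m"
    unfolding binom_moment_def sum_dterm_def sum_dterm_weighted_def sum_distrib_left sum_subtractf[symmetric]
    by (rule sum.cong[OF refl]) (simp add: algebra_simps)
  have "scaled_dd m 1 = 2^m * (fact m * (2 * binom_moment m 1)) / (2^m * 2^m)"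
  proof -
    have "(2::real)^(2*m) = 2^m * 2^m" by (simp add: mult_2 power_add)
    then show ?thesis unfolding scaled_dd_def dd_binom_moment by simp
  qed
  also have "\<dots> = 2^m * ((2*real m + 1) * (fact m * sum_dterm m) - fact m * sum_dterm_weighted m) / (2^m * 2^m)"
    unfolding moment_1 by (simp only: right_diff_distrib mult_ac)
  also have "\<dots> = (2*real m + 1) * (\<Prod>k=1..m. real (4*k - 1)) - (\<Prod>k=1..m. real (4*k + 1))"
  proof -
    have cancel: "P * (c * (P * a) - P * b) / (P * P) = c * a - b" if "P \<noteq> 0" for P c a b :: real
      using that by (simp add: field_simps)
    show ?thesis unfolding sum_dterm_closed sum_dterm_weighted_closed by (rule cancel) simp
  qed
  finally show ?thesis .
qed

(* Both sides obey the same recurrence and agree for l = 0, 1. *)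
lemma scaled_dd_closed:
  "scaled_dd m l = alpha l m * (\<Prod>k=1..m. real (4*k - 1)) - beta l m * (\<Prod>k=1..m. real (4*k + 1))"
proof (induction l rule: induct_nat_012)
  case (ge2 l)
  show ?case unfolding scaled_dd_rec ge2.IH alpha_rec beta_rec by (simp add: algebra_simps)
qed (simp_all add: scaled_dd_0 scaled_dd_1[unfolded One_nat_def] alpha_beta_initial[unfolded One_nat_def])

definition alpha_poly :: "nat \<Rightarrow> real poly" where
  "alpha_poly l = (\<Sum>t=0..l div 2. smult (real (l choose (2*t)) * arith_prod 5 4 (t - 1))
                     (lin_prod 4 3 4 t * lin_prod 2 1 (-2) (l - 2*t)))"

definition beta_poly :: "nat \<Rightarrow> real poly" where
  "beta_poly l = (\<Sum>t=1..(l + 1) div 2. smult (real (l choose (2*t - 1)) * arith_prod 3 4 (t - 1))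
                     (lin_prod 4 5 4 (t - 1) * lin_prod 2 1 (-2) (l - (2*t - 1))))"

lemma poly_alpha_poly: "poly (alpha_poly l) (real m) = alpha l m"
  unfolding alpha_arith alpha_poly_def poly_sum
  by (intro sum.cong) (simp_all add: poly_lin_prod mult_ac)

lemma poly_beta_poly: "poly (beta_poly l) (real m) = beta l m"
  unfolding beta_arith beta_poly_def poly_sum
  by (intro sum.cong) (simp_all add: poly_lin_prod mult_ac)

lemma degree_term_le:
  "degree (smult c (lin_prod 4 b 4 t * lin_prod 2 1 (-2) n)) \<le> t + n"
proof -
  have "degree (smult c (lin_prod 4 b 4 t * lin_prod 2 1 (-2) n)) \<le> degree (lin_prod 4 b 4 t * lin_prod 2 1 (-2) n)"
    by (rule degree_smult_le)
  also have "\<dots> \<le> degree (lin_prod 4 b 4 t) + degree (lin_prod 2 1 (-2) n)"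
    by (rule degree_mult_le)
  finally show ?thesis by (simp add: degree_lin_prod)
qed

(* The summand t = 0 (for alpha) resp. t = 1 (for beta) dominates. *)
lemma degree_alpha_poly: "degree (alpha_poly l) = l"
proof -
  define f where "f t = smult (real (l choose (2*t)) * arith_prod 5 4 (t - 1))
                     (lin_prod 4 3 4 t * lin_prod 2 1 (-2) (l - 2*t))" for t
  have lead: "degree (f 0) = l"
    unfolding f_def by (simp add: arith_prod_def degree_lin_prod lin_prod_def[of _ _ _ 0])
  have "degree (alpha_poly l) = degree (f 0)"
    unfolding alpha_poly_def f_def[symmetric]
  proof (rule degree_sum_dominant)
    fix t assume "t \<in> {0..l div 2} - {0}"
    then have "t + (l - 2*t) < l" by auto
    moreover have "degree (f t) \<le> t + (l - 2*t)" unfolding f_def by (rule degree_term_le)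
    ultimately show "degree (f t) < degree (f 0)" unfolding lead by linarith
  qed auto
  then show ?thesis unfolding lead .
qed

lemma degree_beta_poly: assumes "1 \<le> l" shows "degree (beta_poly l) = l - 1"
proof -
  define f where "f t = smult (real (l choose (2*t - 1)) * arith_prod 3 4 (t - 1))
                     (lin_prod 4 5 4 (t - 1) * lin_prod 2 1 (-2) (l - (2*t - 1)))" for t
  have lead: "degree (f 1) = l - 1"
    unfolding f_def using assms by (simp add: arith_prod_def degree_lin_prod lin_prod_def[of _ _ _ 0])
  have "degree (beta_poly l) = degree (f 1)"
    unfolding beta_poly_def f_def[symmetric]
  proof (rule degree_sum_dominant)
    fix t assume "t \<in> {1..(l + 1) div 2} - {1}"
    then have "(t - 1) + (l - (2*t - 1)) < l - 1" by auto
    moreover have "degree (f t) \<le> (t - 1) + (l - (2*t - 1))" unfolding f_def by (rule degree_term_le)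
    ultimately show "degree (f t) < degree (f 1)" unfolding lead by linarith
  qed (use assms in auto)
  then show ?thesis unfolding lead .
qed

(* The four claims. *)
theorem mainTheorem8:
  shows "(\<forall>l m. l \<le> m \<longrightarrow>
            dd l m = (1 / (fact l * fact m * 2 ^ (m + l))) *
              (alpha l m * (\<Prod>k = 1..m. real (4*k - 1))
               - beta l m * (\<Prod>k = 1..m. real (4*k + 1))))
       \<and> (\<forall>m::nat. 1 \<le> m \<longrightarrow>
            fact m * 2 ^ (m + 1) * dd 1 m
              = real (2*m + 1) * (\<Prod>k = 1..m. real (4*k - 1)) - (\<Prod>k = 1..m. real (4*k + 1)))
       \<and> (\<forall>l. \<exists>p :: real poly. degree p = l \<and> (\<forall>m \<ge> l. alpha l m = poly p (real m)))
       \<and> (\<forall>l. 1 \<le> l \<longrightarrow>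
            (\<exists>q :: real poly. degree q = l - 1 \<and> (\<forall>m \<ge> l. beta l m = poly q (real m))))"
proof (intro conjI allI impI)
  fix l m :: nat
  have "fact l * fact m * 2 ^ (m + l) \<noteq> (0::real)" by simp
  then show "dd l m = (1 / (fact l * fact m * 2 ^ (m + l))) *
              (alpha l m * (\<Prod>k = 1..m. real (4*k - 1)) - beta l m * (\<Prod>k = 1..m. real (4*k + 1)))"
    using scaled_dd_closed[of m l] unfolding scaled_dd_def by (simp add: field_simps)
next
  fix m :: nat
  show "fact m * 2 ^ (m + 1) * dd 1 m
      = real (2*m + 1) * (\<Prod>k = 1..m. real (4*k - 1)) - (\<Prod>k = 1..m. real (4*k + 1))"
    using scaled_dd_1[of m] unfolding scaled_dd_def by simp
next
  fix l :: nat
  show "\<exists>p :: real poly. degree p = l \<and> (\<forall>m \<ge> l. alpha l m = poly p (real m))"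
    using degree_alpha_poly poly_alpha_poly by metis
next
  fix l :: nat assume "1 \<le> l"
  then show "\<exists>q :: real poly. degree q = l - 1 \<and> (\<forall>m \<ge> l. beta l m = poly q (real m))"
    using degree_beta_poly poly_beta_poly by metis
qed

end
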